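(* Let $r\ge 2$ and let $S$ be a mutual-visibility set of the glued binary tree $GT(r)$. If $|S\cap V_r^{(1)}|\ge 2$, then to each vertex $v\in S\cap V_r^{(1)}$ one can assign a pair of twin quasi-leaves belonging to $T_v$ and not belonging to $S$, in such a way that the pairs assigned to distinct vertices of $S\cap V_r^{(1)}$ are pairwise disjoint.
   Context: A perfect binary tree of depth $r\ge1$ is a rooted tree in which every non-leaf vertex has exactly $2$ children and all leaves have depth $r$. The glued binary tree $GT(r)$ is obtained from two copies $T_r^{(1)}$ and $T_r^{(2)}$ of the perfect binary tree of depth $r$ by pairwise identifying their leaves (via a fixed isomorphism of the copies). The identified vertices are the quasi-leaves; $L(GT(r))=V(T_r^{(1)})\cap V(T_r^{(2)})$ is the set of quasi-leaves, and $V_r^{(i)}=V(T_r^{(i)})\setminus L(GT(r))$ for $i\in\{1,2\}$. Two quasi-leaves $u,v$ with $N(u)=N(v)$ are twin quasi-leaves. For a vertex $u\in V_r^{(1)}$ (resp. $V_r^{(2)}$), $T_u$ denotes the subtree of $T_r^{(1)}$ (resp. $T_r^{(2)}$) rooted at $u$ consisting of $u$ and all its descendants, its leaves being the quasi-leaves that are descendants of $u$. For $S\subseteq V(G)$, two vertices $u,v$ are $S$-visible if there exists a shortest $u,v$-path $P$ with $V(P)\cap S\subseteq\{u,v\}$; $S$ is a mutual-visibility set if every two vertices of $S$ are $S$-visible. *)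

theory Defs
  imports Main
begin

text \<open>Vertices of GT(r) are pairs (i, w) with w a binary string (the path from the root).
  i = 1 or i = 2: non-leaf vertex of the copy T_r^(i), length w < r;
  i = 0: quasi-leaf (identified leaf of both copies), length w = r.
  The fixed isomorphism between the copies is the identity on strings.\<close>

type_synonym gvert = "nat \<times> bool list"

definition gt_V :: "nat \<Rightarrow> gvert set" where
  "gt_V r = {(i, w). ((i = 1 \<or> i = 2) \<and> length w < r) \<or> (i = 0 \<and> length w = r)}"

definition gt_L :: "nat \<Rightarrow> gvert set" where
  "gt_L r = {(i, w). i = 0 \<and> length w = r}"

definition gt_Vcopy :: "nat \<Rightarrow> nat \<Rightarrow> gvert set" where
  "gt_Vcopy r i = {(j, w). j = i \<and> length w < r}"

definition gt_child :: "nat \<Rightarrow> gvert \<Rightarrow> gvert \<Rightarrow> bool" where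
  "gt_child r x y \<longleftrightarrow> x \<in> gt_V r \<and> y \<in> gt_V r \<and> fst x \<noteq> 0 \<and>
     (\<exists>b. snd y = snd x @ [b]) \<and> (fst y = fst x \<or> fst y = 0)"

definition gt_adj :: "nat \<Rightarrow> gvert \<Rightarrow> gvert \<Rightarrow> bool" where
  "gt_adj r x y \<longleftrightarrow> gt_child r x y \<or> gt_child r y x"

definition gt_nbhd :: "nat \<Rightarrow> gvert \<Rightarrow> gvert set" where
  "gt_nbhd r x = {y. gt_adj r x y}"

definition gt_walk :: "nat \<Rightarrow> gvert list \<Rightarrow> bool" where
  "gt_walk r p \<longleftrightarrow> p \<noteq> [] \<and> set p \<subseteq> gt_V r \<and>
     (\<forall>k. Suc k < length p \<longrightarrow> gt_adj r (p ! k) (p ! Suc k))"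

definition gt_dist :: "nat \<Rightarrow> gvert \<Rightarrow> gvert \<Rightarrow> nat" where
  "gt_dist r u v = (LEAST n. \<exists>p. gt_walk r p \<and> hd p = u \<and> last p = v \<and> length p = Suc n)"

definition gt_shortest_path :: "nat \<Rightarrow> gvert \<Rightarrow> gvert \<Rightarrow> gvert list \<Rightarrow> bool" where
  "gt_shortest_path r u v p \<longleftrightarrow> gt_walk r p \<and> hd p = u \<and> last p = v \<and>
     length p = Suc (gt_dist r u v)"

definition gt_S_visible :: "nat \<Rightarrow> gvert set \<Rightarrow> gvert \<Rightarrow> gvert \<Rightarrow> bool" where
  "gt_S_visible r S u v \<longleftrightarrow>
     (\<exists>p. gt_shortest_path r u v p \<and> set p \<inter> S \<subseteq> {u, v})"

definition gt_mutual_visibility :: "nat \<Rightarrow> gvert set \<Rightarrow> bool" where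
  "gt_mutual_visibility r S \<longleftrightarrow> S \<subseteq> gt_V r \<and>
     (\<forall>u\<in>S. \<forall>v\<in>S. gt_S_visible r S u v)"

definition gt_twin :: "nat \<Rightarrow> gvert \<Rightarrow> gvert \<Rightarrow> bool" where
  "gt_twin r x y \<longleftrightarrow> x \<in> gt_L r \<and> y \<in> gt_L r \<and> x \<noteq> y \<and> gt_nbhd r x = gt_nbhd r y"

definition gt_subtree_leaves :: "nat \<Rightarrow> gvert \<Rightarrow> gvert set" where
  "gt_subtree_leaves r v = {(j, u). j = 0 \<and> length u = r \<and> (\<exists>s. u = snd v @ s)}"

end

theory Submission
  imports Defs "HOL-Library.Sublist"
begin

text \<open>If (1, w) lies in a mutual-visibility set S and some vertex of S outside copy 2 lies below
  the child w @ [d] of (1, w), then every other vertex of S in copy 1 lies below w @ [d] too: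
  otherwise every shortest path between the two passes through (1, w), because avoiding it
  forces a detour through copy 2.
  Hence every v in S in copy 1 has a free descendant b(v), namely v itself or, if all other
  copy-1 vertices of S lie below one child of v, the other child, such that no vertex of S
  outside copy 2 except v lies at or below b(v); moreover the words b(v) are pairwise
  incomparable. Two sibling quasi-leaves below b(v) are the twins assigned to v.\<close>

lemma longest_common_prefix_prefix_eq:
  "prefix xs ys \<Longrightarrow> longest_common_prefix xs ys = xs"
  by (induction xs ys rule: longest_common_prefix.induct) auto

lemma longest_common_prefix_snoc:
  "longest_common_prefix (xs @ [x]) ys =
     (if prefix (xs @ [x]) ys then xs @ [x] else longest_common_prefix xs ys)"
proof (induction xs arbitrary: ys)
  case Nil
  then show ?case by (cases ys) auto
next
  case (Cons a xs)
  then show ?case by (cases ys) auto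
qed

lemma length_longest_common_prefix_le:
  "length (longest_common_prefix xs ys) \<le> length xs"
  "length (longest_common_prefix xs ys) \<le> length ys"
  by (simp_all add: prefix_length_le longest_common_prefix_prefix1 longest_common_prefix_prefix2)

definition tree_dist :: "'a list \<Rightarrow> 'a list \<Rightarrow> nat" where
  "tree_dist xs ys = length xs + length ys - 2 * length (longest_common_prefix xs ys)"

lemma tree_dist_self [simp]: "tree_dist xs xs = 0"
  by (simp add: tree_dist_def longest_common_prefix_prefix_eq)

lemma tree_dist_eq_0_iff: "tree_dist xs ys = 0 \<longleftrightarrow> xs = ys"
proof
  assume "tree_dist xs ys = 0"
  then have "length xs \<le> length (longest_common_prefix xs ys)"
            "length ys \<le> length (longest_common_prefix xs ys)"
    using length_longest_common_prefix_le[of xs ys] by (auto simp: tree_dist_def)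
  then show "xs = ys"
    by (metis longest_common_prefix_prefix1 longest_common_prefix_prefix2
        prefix_length_prefix prefix_order.eq_iff)
qed simp

lemma tree_dist_snoc_prefix:
  "prefix (xs @ [x]) ys \<Longrightarrow> tree_dist xs ys = Suc (tree_dist (xs @ [x]) ys)"
  using prefix_length_le[of "xs @ [x]" ys]
  by (simp add: tree_dist_def longest_common_prefix_prefix_eq append_prefixD)

lemma tree_dist_snoc_not_prefix:
  "\<not> prefix (xs @ [x]) ys \<Longrightarrow> tree_dist (xs @ [x]) ys = Suc (tree_dist xs ys)"
  using length_longest_common_prefix_le[of xs ys]
  by (simp add: tree_dist_def longest_common_prefix_snoc)

lemma tree_dist_snoc_cases:
  "tree_dist (xs @ [x]) ys = Suc (tree_dist xs ys) \<or> tree_dist xs ys = Suc (tree_dist (xs @ [x]) ys)"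
  by (cases "prefix (xs @ [x]) ys") (simp_all add: tree_dist_snoc_prefix tree_dist_snoc_not_prefix)

lemma tree_dist_step:
  assumes "xs \<noteq> ys"
  obtains zs x where "xs = zs @ [x]" "tree_dist xs ys = Suc (tree_dist zs ys)"
  | x where "prefix (xs @ [x]) ys" "tree_dist xs ys = Suc (tree_dist (xs @ [x]) ys)"
proof (cases "prefix xs ys")
  case True
  then obtain zs where ys: "ys = xs @ zs" by (rule prefixE)
  with assms obtain x zs' where "zs = x # zs'" by (cases zs) auto
  then have "prefix (xs @ [x]) ys" by (simp add: ys)
  moreover from this have "tree_dist xs ys = Suc (tree_dist (xs @ [x]) ys)"
    by (rule tree_dist_snoc_prefix)
  ultimately show ?thesis by (rule that(2))
next
  case False
  then obtain zs x where xs: "xs = zs @ [x]"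
    by (cases xs rule: rev_cases) auto
  moreover have "tree_dist xs ys = Suc (tree_dist zs ys)"
    using False tree_dist_snoc_not_prefix by (simp add: xs)
  ultimately show ?thesis by (rule that(1))
qed

lemma list_potential_bound:
  fixes f :: "'a \<Rightarrow> nat"
  assumes "xs \<noteq> []" and "\<And>k. Suc k < length xs \<Longrightarrow> f (xs ! k) \<le> Suc (f (xs ! Suc k))"
  shows "f (hd xs) \<le> f (last xs) + (length xs - 1)"
  using assms
proof (induction xs)
  case (Cons x xs)
  show ?case
  proof (cases "xs = []")
    case False
    have "f (hd xs) \<le> f (last xs) + (length xs - 1)"
      using Cons.IH[OF False] Cons.prems(2)[of "Suc _"] by simp
    moreover have "f x \<le> Suc (f (hd xs))"
      using Cons.prems(2)[of 0] False by (simp add: hd_conv_nth)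
    ultimately show ?thesis using False by (cases xs) auto
  qed simp
qed simp

definition copy1_vertex :: "nat \<Rightarrow> bool list \<Rightarrow> gvert" where
  "copy1_vertex r s = (if length s = r then 0 else 1, s)"

lemma copy1_vertex_in_gt_V: "length s \<le> r \<Longrightarrow> copy1_vertex r s \<in> gt_V r"
  by (auto simp: copy1_vertex_def gt_V_def)

lemma gt_adj_commute: "gt_adj r x y \<longleftrightarrow> gt_adj r y x"
  by (auto simp: gt_adj_def)

lemma gt_adj_copy1_vertex_snoc:
  assumes "length s < r"
  shows "gt_adj r (copy1_vertex r s) (copy1_vertex r (s @ [x]))"
proof -
  have "gt_child r (copy1_vertex r s) (copy1_vertex r (s @ [x]))"
    using assms copy1_vertex_in_gt_V[of s r] copy1_vertex_in_gt_V[of "s @ [x]" r]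
    unfolding gt_child_def by (simp add: copy1_vertex_def)
  then show ?thesis by (simp add: gt_adj_def)
qed

lemma gt_walk_Cons:
  "gt_walk r p \<Longrightarrow> x \<in> gt_V r \<Longrightarrow> gt_adj r x (hd p) \<Longrightarrow> gt_walk r (x # p)"
  unfolding gt_walk_def by (auto simp: hd_conv_nth nth_Cons split: nat.split)

lemma gt_walk_copy1_vertices:
  assumes "length s \<le> r" and "length t \<le> r"
  shows "\<exists>p. gt_walk r p \<and> hd p = copy1_vertex r s \<and> last p = copy1_vertex r t \<and>
           length p = Suc (tree_dist s t)"
  using assms(1)
proof (induction "tree_dist s t" arbitrary: s)
  case 0
  then show ?case using copy1_vertex_in_gt_V[OF assms(2)]
    by (intro exI[of _ "[copy1_vertex r t]"]) (auto simp: gt_walk_def tree_dist_eq_0_iff)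
next
  case (Suc n)
  have "s \<noteq> t" using Suc.hyps(2) by auto
  then obtain s' where s': "gt_adj r (copy1_vertex r s) (copy1_vertex r s')"
    "length s' \<le> r" "tree_dist s' t = n"
  proof (cases rule: tree_dist_step)
    case (1 zs x)
    then have "length zs < r" using Suc.prems by simp
    then have "gt_adj r (copy1_vertex r s) (copy1_vertex r zs)"
      using gt_adj_copy1_vertex_snoc gt_adj_commute 1(1) by metis
    then show ?thesis using that[of zs] 1(2) Suc.hyps(2) \<open>length zs < r\<close> by simp
  next
    case (2 x)
    then have "length (s @ [x]) \<le> r" using prefix_length_le assms(2) order_trans by blast
    then show ?thesis
      using that[of "s @ [x]"] gt_adj_copy1_vertex_snoc[of s r x] 2(2) Suc.hyps(2) by simp
  qed
  then obtain p where p: "gt_walk r p" "hd p = copy1_vertex r s'" "last p = copy1_vertex r t"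
      "length p = Suc n"
    using Suc.hyps(1) by blast
  have "gt_walk r (copy1_vertex r s # p)"
    using gt_walk_Cons[OF p(1) copy1_vertex_in_gt_V[OF Suc.prems]] s'(1) p(2) by simp
  then show ?case using p Suc.hyps(2)
    by (intro exI[of _ "copy1_vertex r s # p"]) (simp add: gt_walk_def)
qed

lemma gt_dist_copy1_vertices_le:
  "length s \<le> r \<Longrightarrow> length t \<le> r \<Longrightarrow>
     gt_dist r (copy1_vertex r s) (copy1_vertex r t) \<le> tree_dist s t"
  unfolding gt_dist_def by (rule Least_le) (use gt_walk_copy1_vertices in blast)

text \<open>Along a walk avoiding (1, w) this potential drops by at most one per step, and below
  w @ [d] it exceeds the copy-1 distance to y by one: this is what makes (1, w) unavoidable.\<close>

definition branch_potential :: "bool list \<Rightarrow> bool list \<Rightarrow> gvert \<Rightarrow> nat" where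
  "branch_potential b y z =
     tree_dist (snd z) y + (if fst z = 2 \<or> prefix b (snd z) then 1 else 0)"

lemma branch_potential_child:
  assumes "gt_child r z z'" and "z \<noteq> (1, w)" and "length y < r"
  shows "branch_potential (w @ [d]) y z \<le> Suc (branch_potential (w @ [d]) y z')"
    and "branch_potential (w @ [d]) y z' \<le> Suc (branch_potential (w @ [d]) y z)"
proof -
  obtain i s j x where z: "z = (i, s)" and z': "z' = (j, s @ [x])"
    using assms(1) by (cases z, cases z') (auto simp: gt_child_def)
  have ij: "i = 1 \<or> i = 2" "j = i \<or> j = 0" "j = 0 \<longrightarrow> length (s @ [x]) = r"
    using assms(1) by (auto simp: gt_child_def gt_V_def z z')
  have "tree_dist (s @ [x]) y = Suc (tree_dist s y)" if "j = 0"
    using ij(3) assms(3) that by (intro tree_dist_snoc_not_prefix) (auto dest: prefix_length_le)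
  moreover have "prefix (w @ [d]) (s @ [x]) \<longleftrightarrow> prefix (w @ [d]) s" if "i = 1"
    using assms(2) that z by auto
  ultimately show "branch_potential (w @ [d]) y z \<le> Suc (branch_potential (w @ [d]) y z')"
    and "branch_potential (w @ [d]) y z' \<le> Suc (branch_potential (w @ [d]) y z)"
    using ij tree_dist_snoc_cases[of s x y] by (auto simp: branch_potential_def z z')
qed

lemma branch_potential_adj:
  assumes "gt_adj r z z'" and "z \<noteq> (1, w)" and "z' \<noteq> (1, w)" and "length y < r"
  shows "branch_potential (w @ [d]) y z \<le> Suc (branch_potential (w @ [d]) y z')"
  using assms branch_potential_child[of r z z' w y d] branch_potential_child[of r z' z w y d]
  by (auto simp: gt_adj_def)

lemma gt_mutual_visibility_branch:
  assumes mv: "gt_mutual_visibility r S"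
    and "(1, w) \<in> S" and "a \<in> S" and "fst a \<noteq> 2" and below: "prefix (w @ [d]) (snd a)"
    and "(1, y) \<in> S" and "y \<noteq> w"
  shows "prefix (w @ [d]) y"
proof (rule ccontr)
  assume not_below: "\<not> prefix (w @ [d]) y"
  let ?\<phi> = "branch_potential (w @ [d]) y"
  have "gt_S_visible r S a (1, y)"
    using mv assms(3,6) unfolding gt_mutual_visibility_def by blast
  then obtain p where p: "gt_shortest_path r a (1, y) p" and "set p \<inter> S \<subseteq> {a, (1, y)}"
    unfolding gt_S_visible_def by blast
  moreover have "a \<noteq> (1, w)" using below by auto
  ultimately have avoid: "(1, w) \<notin> set p" using assms by auto
  have "a \<in> gt_V r" "(1, y) \<in> gt_V r" using mv assms by (auto simp: gt_mutual_visibility_def)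
  then have a: "a = copy1_vertex r (snd a)" "length (snd a) \<le> r" and y: "length y < r"
    using \<open>fst a \<noteq> 2\<close> by (auto simp: gt_V_def copy1_vertex_def)
  have walk: "gt_walk r p" "hd p = a" "last p = (1, y)"
    using p by (auto simp: gt_shortest_path_def)
  have "?\<phi> (hd p) \<le> ?\<phi> (last p) + (length p - 1)"
  proof (rule list_potential_bound)
    fix k assume "Suc k < length p"
    then show "?\<phi> (p ! k) \<le> Suc (?\<phi> (p ! Suc k))"
      using walk avoid y branch_potential_adj nth_mem Suc_lessD
      by (metis gt_walk_def)
  qed (use walk in \<open>auto simp: gt_walk_def\<close>)
  moreover have "length p \<le> Suc (tree_dist (snd a) y)"
    using p gt_dist_copy1_vertices_le[of "snd a" r y] a y
    by (auto simp: gt_shortest_path_def copy1_vertex_def)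
  moreover have "?\<phi> a = Suc (tree_dist (snd a) y)" and "?\<phi> (1, y) = 0"
    using below not_below by (simp_all add: branch_potential_def)
  ultimately show False using walk by simp
qed

lemma prefix_snoc_eq: "prefix (xs @ [x]) zs \<Longrightarrow> prefix (xs @ [y]) zs \<Longrightarrow> x = y"
  by (auto simp: prefix_def)

lemma exists_other_if_card_ge_2:
  assumes "2 \<le> card A"
  shows "\<exists>y\<in>A. y \<noteq> x"
proof (rule ccontr)
  assume "\<not> (\<exists>y\<in>A. y \<noteq> x)"
  then have "card A \<le> card {x}" by (intro card_mono) auto
  with assms show False by simp
qed

definition free_extension :: "'a list set \<Rightarrow> 'a list set \<Rightarrow> 'a list \<Rightarrow> 'a list \<Rightarrow> bool" where
  "free_extension W X w b \<longleftrightarrow>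
     (b = w \<or> (\<exists>c. b = w @ [c])) \<and> (\<exists>y\<in>W. length b \<le> length y) \<and>
     (\<forall>x\<in>X. prefix b x \<longrightarrow> x = w)"

locale blocking_words =
  fixes W X :: "bool list set"
  assumes words_subset: "W \<subseteq> X"
    and blocking: "\<And>w x d y. w \<in> W \<Longrightarrow> x \<in> X \<Longrightarrow> prefix (w @ [d]) x \<Longrightarrow>
                     y \<in> W \<Longrightarrow> y \<noteq> w \<Longrightarrow> prefix (w @ [d]) y"
begin

lemma free_extension_exists:
  assumes "w \<in> W" and "y \<in> W" and "y \<noteq> w"
  shows "\<exists>b. free_extension W X w b"
proof (cases "\<forall>u\<in>W. prefix w u")
  case True
  let ?d = "y ! length w"
  have "strict_prefix w y" using True assms by (simp add: strict_prefix_def)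
  then have below: "prefix (w @ [?d]) y"
    by (simp add: append_one_prefix prefix_length_less strict_prefix_def)
  have "\<not> prefix (w @ [\<not> ?d]) x" if "x \<in> X" for x
  proof
    assume "prefix (w @ [\<not> ?d]) x"
    then have "prefix (w @ [\<not> ?d]) y" by (rule blocking[OF assms(1) that _ assms(2,3)])
    from prefix_snoc_eq[OF below this] show False by simp
  qed
  moreover have "length (w @ [\<not> ?d]) \<le> length y" using below prefix_length_le by fastforce
  ultimately have "free_extension W X w (w @ [\<not> ?d])"
    unfolding free_extension_def using assms(2) by blast
  then show ?thesis ..
next
  case False
  then obtain y' where "y' \<in> W" and "\<not> prefix w y'" by blast
  have "x = w" if "x \<in> X" and "prefix w x" for x
  proof (rule ccontr)
    assume "x \<noteq> w"
    with \<open>prefix w x\<close> have "prefix (w @ [x ! length w]) x"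
      by (simp add: append_one_prefix prefix_length_less strict_prefix_def)
    moreover have "y' \<noteq> w" using \<open>\<not> prefix w y'\<close> by auto
    ultimately have "prefix (w @ [x ! length w]) y'"
      using blocking[OF assms(1) that(1)] \<open>y' \<in> W\<close> by blast
    with \<open>\<not> prefix w y'\<close> show False using append_prefixD by blast
  qed
  then have "free_extension W X w w" unfolding free_extension_def using assms(1) by blast
  then show ?thesis ..
qed

lemma free_extension_choice:
  assumes "2 \<le> card W"
  obtains b where "\<And>w. w \<in> W \<Longrightarrow> free_extension W X w (b w)"
proof -
  have "\<exists>b. free_extension W X w b" if "w \<in> W" for w
    using exists_other_if_card_ge_2[OF assms] free_extension_exists[OF that] by blast
  then show ?thesis using that by metis
qed

lemma free_extension_not_prefix:
  assumes "w \<in> W" and "w' \<in> W" and "w \<noteq> w'"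
    and "free_extension W X w b" and "free_extension W X w' b'"
  shows "\<not> prefix b b'"
proof
  assume "prefix b b'"
  from assms(4,5) have b: "prefix w b" "length b \<le> Suc (length w)" "\<forall>x\<in>X. prefix b x \<longrightarrow> x = w"
    and b': "prefix w' b'" "length b' \<le> Suc (length w')" "\<forall>x\<in>X. prefix b' x \<longrightarrow> x = w'"
    unfolding free_extension_def by auto
  have "w \<in> X" "w' \<in> X" using assms(1,2) words_subset by auto
  have "prefix w b'" using b(1) \<open>prefix b b'\<close> by (rule prefix_order.trans)
  then consider "strict_prefix w w'" | "strict_prefix w' w"
    using prefix_same_cases[OF _ b'(1)] assms(3) by (auto simp: strict_prefix_def)
  then show False
  proof cases
    case 1
    then have "prefix b w'"
      using b(2) \<open>prefix b b'\<close> b'(1) prefix_length_less prefix_length_prefix by fastforce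
    then show False using b(3) \<open>w' \<in> X\<close> assms(3) by auto
  next
    case 2
    then have "prefix b' w"
      using b'(2) \<open>prefix w b'\<close> prefix_length_less prefix_length_prefix by fastforce
    then show False using b'(3) \<open>w \<in> X\<close> assms(3) by auto
  qed
qed

lemma free_extensions_parallel:
  "w \<in> W \<Longrightarrow> w' \<in> W \<Longrightarrow> w \<noteq> w' \<Longrightarrow> free_extension W X w b \<Longrightarrow> free_extension W X w' b' \<Longrightarrow>
     b \<parallel> b'"
  using free_extension_not_prefix by (metis parallelI)

end

definition copy1_words :: "nat \<Rightarrow> gvert set \<Rightarrow> bool list set" where
  "copy1_words r S = snd ` (S \<inter> gt_Vcopy r 1)"

definition non_copy2_words :: "gvert set \<Rightarrow> bool list set" where
  "non_copy2_words S = snd ` {a \<in> S. fst a \<noteq> 2}"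

lemma gt_Vcopy_pair: "v \<in> gt_Vcopy r i \<Longrightarrow> (i, snd v) = v"
  by (auto simp: gt_Vcopy_def)

lemma gt_mutual_visibility_blocking_words:
  assumes "gt_mutual_visibility r S"
  shows "blocking_words (copy1_words r S) (non_copy2_words S)"
proof
  have "S \<inter> gt_Vcopy r 1 \<subseteq> {a \<in> S. fst a \<noteq> 2}" by (auto simp: gt_Vcopy_def)
  then show "copy1_words r S \<subseteq> non_copy2_words S"
    unfolding copy1_words_def non_copy2_words_def by (rule image_mono)
next
  fix w x d y
  assume "w \<in> copy1_words r S" "x \<in> non_copy2_words S" "prefix (w @ [d]) x"
    "y \<in> copy1_words r S" "y \<noteq> w"
  moreover have "(1, snd v) \<in> S" if "v \<in> S \<inter> gt_Vcopy r 1" for v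
    using that gt_Vcopy_pair by fastforce
  ultimately show "prefix (w @ [d]) y"
    using gt_mutual_visibility_branch[OF assms]
    unfolding copy1_words_def non_copy2_words_def by blast
qed

definition twin_leaves :: "nat \<Rightarrow> bool list \<Rightarrow> gvert \<times> gvert" where
  "twin_leaves r b =
     (let s = b @ replicate (r - Suc (length b)) False in ((0, s @ [False]), (0, s @ [True])))"

lemma gt_nbhd_quasi_leaf:
  assumes "Suc (length s) = r"
  shows "gt_nbhd r (0, s @ [x]) = {(1, s), (2, s)}"
proof -
  have "gt_child r z (0, s @ [x]) \<longleftrightarrow> z = (1, s) \<or> z = (2, s)" for z
    using assms by (cases z) (auto simp: gt_child_def gt_V_def)
  moreover have "\<not> gt_child r (0, s @ [x]) z" for z
    by (simp add: gt_child_def)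
  ultimately show ?thesis
    unfolding gt_nbhd_def gt_adj_def by blast
qed

lemma twin_leaves_twin:
  "length b < r \<Longrightarrow> gt_twin r (fst (twin_leaves r b)) (snd (twin_leaves r b))"
  using gt_nbhd_quasi_leaf[of "b @ replicate (r - Suc (length b)) False" r]
  by (simp add: twin_leaves_def gt_twin_def gt_L_def)

lemma twin_leaves_subtree:
  "length b < r \<Longrightarrow> prefix (snd v) b \<Longrightarrow>
     {fst (twin_leaves r b), snd (twin_leaves r b)} \<subseteq> gt_subtree_leaves r v"
  by (auto simp: twin_leaves_def gt_subtree_leaves_def prefix_def)

lemma twin_leaves_disjoint:
  "b \<parallel> b' \<Longrightarrow>
     {fst (twin_leaves r b), snd (twin_leaves r b)} \<inter> {fst (twin_leaves r b'), snd (twin_leaves r b')} = {}"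
  by (auto simp: twin_leaves_def parallel_def) (metis prefixI prefix_same_cases)+

lemma free_extension_twin_leaves:
  assumes mv: "gt_mutual_visibility r S" and w: "snd v \<in> copy1_words r S"
    and b: "free_extension (copy1_words r S) (non_copy2_words S) (snd v) b"
  shows "gt_twin r (fst (twin_leaves r b)) (snd (twin_leaves r b))"
    and "{fst (twin_leaves r b), snd (twin_leaves r b)} \<subseteq> gt_subtree_leaves r v - S"
proof -
  have short: "length y < r" if "y \<in> copy1_words r S" for y
    using that by (auto simp: copy1_words_def gt_Vcopy_def)
  with b have b_short: "length b < r" and "prefix (snd v) b"
    unfolding free_extension_def by force+
  then have sub: "{fst (twin_leaves r b), snd (twin_leaves r b)} \<subseteq> gt_subtree_leaves r v"
    by (rule twin_leaves_subtree)
  show "gt_twin r (fst (twin_leaves r b)) (snd (twin_leaves r b))"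
    using b_short by (rule twin_leaves_twin)
  have "z \<notin> S" if "z \<in> gt_subtree_leaves r (1, b)" for z
  proof
    assume "z \<in> S"
    with that have "snd z \<in> non_copy2_words S" and "prefix b (snd z)" and "length (snd z) = r"
      by (auto simp: non_copy2_words_def gt_subtree_leaves_def)
    then show False using b short[OF w] by (auto simp: free_extension_def)
  qed
  with sub twin_leaves_subtree[OF b_short, of "(1, b)"]
  show "{fst (twin_leaves r b), snd (twin_leaves r b)} \<subseteq> gt_subtree_leaves r v - S"
    by auto
qed

theorem mainTheorem2:
  fixes r :: nat and S :: "gvert set"
  assumes "r \<ge> 2"
    and "gt_mutual_visibility r S"
    and "card (S \<inter> gt_Vcopy r 1) \<ge> 2"
  shows "\<exists>f :: gvert \<Rightarrow> gvert \<times> gvert.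
     (\<forall>v \<in> S \<inter> gt_Vcopy r 1.
        gt_twin r (fst (f v)) (snd (f v)) \<and>
        fst (f v) \<in> gt_subtree_leaves r v \<and> snd (f v) \<in> gt_subtree_leaves r v \<and>
        fst (f v) \<notin> S \<and> snd (f v) \<notin> S) \<and>
     (\<forall>v \<in> S \<inter> gt_Vcopy r 1. \<forall>v' \<in> S \<inter> gt_Vcopy r 1. v \<noteq> v' \<longrightarrow>
        {fst (f v), snd (f v)} \<inter> {fst (f v'), snd (f v')} = {})"
proof -
  let ?A = "S \<inter> gt_Vcopy r 1" and ?W = "copy1_words r S" and ?X = "non_copy2_words S"
  interpret blocking_words ?W ?X
    using assms(2) by (rule gt_mutual_visibility_blocking_words)
  have inj: "inj_on snd ?A" by (auto simp: inj_on_def gt_Vcopy_def)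
  then have "2 \<le> card ?W" using assms(3) by (simp add: copy1_words_def card_image)
  then obtain b where b: "\<And>w. w \<in> ?W \<Longrightarrow> free_extension ?W ?X w (b w)"
    using free_extension_choice by blast
  have W: "snd v \<in> ?W" if "v \<in> ?A" for v
    using that unfolding copy1_words_def by (rule imageI)
  let ?f = "\<lambda>v. twin_leaves r (b (snd v))"
  have "b (snd v) \<parallel> b (snd v')" if "v \<in> ?A" "v' \<in> ?A" "v \<noteq> v'" for v v'
    using W[OF that(1)] W[OF that(2)] inj_on_contraD[OF inj that(3,1,2)]
    by (metis free_extensions_parallel b)
  with free_extension_twin_leaves[OF assms(2) W b[OF W]] show ?thesis
    by (intro exI[of _ ?f]) (auto simp: twin_leaves_disjoint)
qed

end
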